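(* Let $\mathcal{P}\subseteq[0,1]^n$ be a polytope. If $\mathcal{P}$ is not of the form $\mathcal{P}=[0,1]^n\cap\mathcal{H}$ for some affine subspace $\mathcal{H}\subseteq\mathbb{R}^n$, then no strong Bernoulli factory for $\mathcal{P}$ exists.
   Context: A Bernoulli factory with output set $V$ (for inputs $x=(x_1,\dots,x_n)\in[0,1]^n$) is a (possibly infinite) rooted binary tree in which every internal node is labeled either by an index $i\in[n]$ or by a known constant $c\in(0,1)$, the two edges from an internal node to its children are labeled $0$ and $1$, and every leaf is labeled by an element of $V$. On input $x$, one starts at the root; at an internal node labeled $i$ one flips a fresh independent coin that equals $1$ with probability $x_i$, at a node labeled $c$ a fresh independent coin with bias $c$, and follows the edge labeled by the outcome; on reaching a leaf one outputs its label. $\mathcal{F}(x)$ denotes the random output ($\mathcal{F}(x)=\emptyset$ if no leaf is reached); $\mathcal{F}$ terminates almost surely on $S$ if $\Pr[\mathcal{F}(x)=\emptyset]=0$ for all $x\in S$. For a polytope $\mathcal{P}\subseteq[0,1]^n$ with vertex set $V$ (vertices viewed as vectors in $\mathbb{R}^n$), a strong Bernoulli factory for $\mathcal{P}$ is a Bernoulli factory $\mathcal{F}$ with output set $V$ that terminates almost surely on all of $\mathcal{P}$ and satisfies $\mathbb{E}[\mathcal{F}(x)]=x$ for all $x\in\mathcal{P}$. *)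

theory Defs
  imports "HOL-Analysis.Analysis"
begin

text \<open>Node labels of a Bernoulli factory tree: an internal node flipping the coin of
  input index i, an internal node flipping a coin of known bias c, or a leaf
  with an output label.\<close>
datatype ('i, 'v) bf_node = Coin 'i | Const real | Leaf 'v

text \<open>A (possibly infinite) rooted binary tree: the node at position p, where p is the
  list of edge labels (False = 0, True = 1) on the path from the root.  Only
  reachable positions (all proper prefixes internal) matter.\<close>
type_synonym ('i, 'v) bf_tree = "bool list \<Rightarrow> ('i, 'v) bf_node"

definition unit_cube :: "(real ^ 'n) set" where
  "unit_cube = {x. \<forall>i. 0 \<le> x $ i \<and> x $ i \<le> 1}"

fun is_leaf :: "('i, 'v) bf_node \<Rightarrow> bool" where
  "is_leaf (Leaf v) = True"
| "is_leaf _ = False"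

fun leaf_label :: "('i, 'v) bf_node \<Rightarrow> 'v" where
  "leaf_label (Leaf v) = v"
| "leaf_label _ = undefined"

fun edge_prob :: "('n, 'v) bf_node \<Rightarrow> real ^ 'n \<Rightarrow> bool \<Rightarrow> real" where
  "edge_prob (Coin i) x b = (if b then x $ i else 1 - x $ i)"
| "edge_prob (Const c) x b = (if b then c else 1 - c)"
| "edge_prob (Leaf v) x b = 0"

definition reachable :: "('i, 'v) bf_tree \<Rightarrow> bool list \<Rightarrow> bool" where
  "reachable T p \<longleftrightarrow> (\<forall>k < length p. \<not> is_leaf (T (take k p)))"

definition path_weight :: "('n, 'v) bf_tree \<Rightarrow> real ^ 'n \<Rightarrow> bool list \<Rightarrow> real" where
  "path_weight T x p = (\<Prod>k < length p. edge_prob (T (take k p)) x (p ! k))"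

definition leaf_paths :: "('i, 'v) bf_tree \<Rightarrow> bool list set" where
  "leaf_paths T = {p. reachable T p \<and> is_leaf (T p)}"

definition output_prob :: "('n, 'v) bf_tree \<Rightarrow> real ^ 'n \<Rightarrow> 'v \<Rightarrow> real" where
  "output_prob T x v = infsum (path_weight T x) {p \<in> leaf_paths T. T p = Leaf v}"

definition halt_prob :: "('n, 'v) bf_tree \<Rightarrow> real ^ 'n \<Rightarrow> real" where
  "halt_prob T x = infsum (path_weight T x) (leaf_paths T)"

definition bf_expectation :: "('n, real ^ 'n) bf_tree \<Rightarrow> real ^ 'n \<Rightarrow> real ^ 'n" where
  "bf_expectation T x = infsum (\<lambda>p. path_weight T x p *\<^sub>R leaf_label (T p)) (leaf_paths T)"

definition bernoulli_factory :: "('n, 'v) bf_tree \<Rightarrow> 'v set \<Rightarrow> bool" where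
  "bernoulli_factory T V \<longleftrightarrow>
     (\<forall>p. reachable T p \<longrightarrow>
        (\<forall>c. T p = Const c \<longrightarrow> 0 < c \<and> c < 1) \<and>
        (\<forall>v. T p = Leaf v \<longrightarrow> v \<in> V))"

definition terminates_as :: "('n, 'v) bf_tree \<Rightarrow> (real ^ 'n) set \<Rightarrow> bool" where
  "terminates_as T S \<longleftrightarrow> (\<forall>x \<in> S. halt_prob T x = 1)"

definition strong_bernoulli_factory :: "(real ^ 'n) set \<Rightarrow> ('n, real ^ 'n) bf_tree \<Rightarrow> bool" where
  "strong_bernoulli_factory P T \<longleftrightarrow>
     bernoulli_factory T {v. v extreme_point_of P} \<and>
     terminates_as T P \<and>
     (\<forall>x \<in> P. bf_expectation T x = x)"

end

theory Submission
  imports Defs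
begin

(* Let q x v = output_prob T x v be the probability that the factory outputs the vertex v on
   input x.  For x in P the numbers q x v are convex weights on the vertices with barycentre x,
   and whether q x v > 0 depends only on which coordinates of x are 0 and which are 1: a finite
   path has positive probability iff none of its coin flips is impossible.
   Take x0 in the relative interior of P and z in the cube and in the affine hull of P.  x0
   lies only on those faces of the cube that contain the whole affine hull of P, so every
   point of the half-open segment [x0, z) has the same 0/1 coordinates as x0.  If y is the
   last point of the segment lying in P and y differs from z, then q y and q x0 have the same
   support, so (1 + e) q y - e q x0 are still convex weights for small e > 0; their
   barycentre lies in P beyond y on the segment, a contradiction.  Hence
   P = unit_cube \<inter> affine hull P. *)

section \<open>Convex weights and the unit cube\<close>

definition same_01_coords :: "real ^ 'n \<Rightarrow> real ^ 'n \<Rightarrow> bool" where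
  "same_01_coords x y \<longleftrightarrow> (\<forall>i. (x $ i = 0 \<longleftrightarrow> y $ i = 0) \<and> (x $ i = 1 \<longleftrightarrow> y $ i = 1))"

definition convex_weights :: "'a set \<Rightarrow> ('a \<Rightarrow> real) \<Rightarrow> 'a::real_vector \<Rightarrow> bool" where
  "convex_weights V u y \<longleftrightarrow> (\<forall>v\<in>V. 0 \<le> u v) \<and> sum u V = 1 \<and> (\<Sum>v\<in>V. u v *\<^sub>R v) = y"

lemma convex_weights_imp_mem_convex_hull:
  "finite V \<Longrightarrow> convex_weights V u y \<Longrightarrow> y \<in> convex hull V"
  unfolding convex_hull_finite convex_weights_def by blast

lemma convex_weights_extend_beyond:
  assumes "finite V" and x: "convex_weights V u x" and y: "convex_weights V w y"
    and supp: "\<And>v. v \<in> V \<Longrightarrow> 0 < u v \<Longrightarrow> 0 < w v"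
  obtains \<epsilon> where "0 < \<epsilon>" "\<And>e. 0 \<le> e \<Longrightarrow> e \<le> \<epsilon> \<Longrightarrow> y + e *\<^sub>R (y - x) \<in> convex hull V"
proof
  define \<epsilon> where "\<epsilon> = Min (insert 1 (w ` {v \<in> V. 0 < w v}))"
  show "0 < \<epsilon>"
    unfolding \<epsilon>_def using \<open>finite V\<close> by (subst Min_gr_iff) auto
  fix e assume e: "0 \<le> e" "e \<le> \<epsilon>"
  have "convex_weights V (\<lambda>v. w v + e * (w v - u v)) (y + e *\<^sub>R (y - x))"
    unfolding convex_weights_def
  proof (intro conjI ballI)
    fix v assume v: "v \<in> V"
    show "0 \<le> w v + e * (w v - u v)"
    proof (cases "0 < w v")
      case True
      have "\<epsilon> \<le> w v"
        unfolding \<epsilon>_def using \<open>finite V\<close> v True by (intro Min_le) auto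
      have "u v \<le> 1"
        using x v \<open>finite V\<close> member_le_sum[of v V u] by (auto simp: convex_weights_def)
      then have "e * u v \<le> e"
        using e(1) by (rule mult_left_le)
      also have "e \<le> w v"
        using e(2) \<open>\<epsilon> \<le> w v\<close> by linarith
      finally have "e * u v \<le> w v" .
      moreover have "0 \<le> e * w v"
        using True e(1) by simp
      ultimately show ?thesis
        by (simp add: algebra_simps)
    next
      case False
      then have "w v = 0" "u v = 0"
        using x y supp v by (force simp: convex_weights_def)+
      then show ?thesis by simp
    qed
  next
    show "(\<Sum>v\<in>V. w v + e * (w v - u v)) = 1"
      using x y by (simp add: convex_weights_def sum.distrib sum_subtractf sum_distrib_left[symmetric])
  next
    have "(\<Sum>v\<in>V. (w v + e * (w v - u v)) *\<^sub>R v)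
        = (1 + e) *\<^sub>R (\<Sum>v\<in>V. w v *\<^sub>R v) - e *\<^sub>R (\<Sum>v\<in>V. u v *\<^sub>R v)"
      by (simp add: algebra_simps sum.distrib sum_subtractf scaleR_sum_right)
    then show "(\<Sum>v\<in>V. (w v + e * (w v - u v)) *\<^sub>R v) = y + e *\<^sub>R (y - x)"
      using x y by (simp add: convex_weights_def algebra_simps)
  qed
  then show "y + e *\<^sub>R (y - x) \<in> convex hull V"
    using \<open>finite V\<close> by (rule convex_weights_imp_mem_convex_hull[rotated])
qed

lemma rel_interior_two_sided_step:
  fixes S :: "'a::euclidean_space set"
  assumes "x \<in> rel_interior S" "w \<in> affine hull S"
  obtains t where "0 < t" "t \<le> 1" "x + t *\<^sub>R (w - x) \<in> S" "x - t *\<^sub>R (w - x) \<in> S"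
proof -
  obtain r where r: "0 < r" "cball x r \<inter> affine hull S \<subseteq> S"
    using assms(1) mem_rel_interior_cball by blast
  define n where "n = norm (w - x)"
  define t where "t = r / (r + n)"
  have "0 \<le> n"
    by (simp add: n_def)
  then have t: "0 < t" "t \<le> 1"
    using r(1) by (simp_all add: t_def)
  have "t * n = r * (n / (r + n))"
    by (simp add: t_def)
  also have "\<dots> \<le> r"
    using mult_left_mono[of "n / (r + n)" 1 r] r(1) \<open>0 \<le> n\<close> by simp
  finally have "t * n \<le> r" .
  have x_aff: "x \<in> affine hull S"
    using assms(1) rel_interior_subset by (blast intro: hull_inc)
  have step: "x + s *\<^sub>R (w - x) \<in> S" if "\<bar>s\<bar> = t" for s
  proof (rule subsetD[OF r(2)], rule IntI)
    show "x + s *\<^sub>R (w - x) \<in> cball x r"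
      using that \<open>t * n \<le> r\<close> by (simp add: dist_norm n_def)
    have "x + s *\<^sub>R (w - x) = (1 - s) *\<^sub>R x + s *\<^sub>R w"
      by (simp add: algebra_simps)
    then show "x + s *\<^sub>R (w - x) \<in> affine hull S"
      using mem_affine[OF affine_affine_hull x_aff assms(2)] by simp
  qed
  show thesis
    using step[of t] step[of "- t"] t by (intro that) auto
qed

lemma rel_interior_cube_coord_eq:
  assumes "S \<subseteq> unit_cube" "x \<in> rel_interior S" "w \<in> affine hull S" "x $ i = 0 \<or> x $ i = 1"
  shows "w $ i = x $ i"
proof -
  obtain t where t: "0 < t" "x + t *\<^sub>R (w - x) \<in> S" "x - t *\<^sub>R (w - x) \<in> S"
    using rel_interior_two_sided_step[OF assms(2,3)] by metis
  then have "0 \<le> x $ i + t * (w $ i - x $ i)" "x $ i + t * (w $ i - x $ i) \<le> 1"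
    "0 \<le> x $ i - t * (w $ i - x $ i)" "x $ i - t * (w $ i - x $ i) \<le> 1"
    using assms(1) by (auto simp: unit_cube_def)
  then have "t * (w $ i - x $ i) = 0"
    using assms(4) by linarith
  then show ?thesis
    using t(1) by simp
qed

lemma rel_interior_segment_same_01_coords:
  assumes "S \<subseteq> unit_cube" "x \<in> rel_interior S" "z \<in> unit_cube" "z \<in> affine hull S"
    and "0 \<le> s" "s < 1"
  shows "same_01_coords x (x + s *\<^sub>R (z - x))"
  unfolding same_01_coords_def
proof
  fix i
  have x: "0 \<le> x $ i" "x $ i \<le> 1"
    using assms(1,2) rel_interior_subset by (auto simp: unit_cube_def)
  have z: "0 \<le> z $ i" "z $ i \<le> 1"
    using assms(3) by (auto simp: unit_cube_def)
  have y: "(x + s *\<^sub>R (z - x)) $ i = (1 - s) * x $ i + s * z $ i"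
    by (simp add: algebra_simps)
  show "(x $ i = 0 \<longleftrightarrow> (x + s *\<^sub>R (z - x)) $ i = 0) \<and> (x $ i = 1 \<longleftrightarrow> (x + s *\<^sub>R (z - x)) $ i = 1)"
  proof (cases "x $ i = 0 \<or> x $ i = 1")
    case True
    then have "z $ i = x $ i"
      using rel_interior_cube_coord_eq assms(1,2,4) by blast
    then show ?thesis
      unfolding y by (simp add: algebra_simps)
  next
    case False
    then have "0 < (1 - s) * x $ i" "(1 - s) * x $ i < 1 - s"
      using x assms(6) by auto
    moreover have "0 \<le> s * z $ i" "s * z $ i \<le> s"
      using z assms(5) by (auto simp: mult_left_le)
    ultimately have "0 < (1 - s) * x $ i + s * z $ i" "(1 - s) * x $ i + s * z $ i < 1"
      by linarith+
    then show ?thesis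
      unfolding y using False by simp
  qed
qed

lemma compact_exists_ge_if_no_max_below:
  fixes I :: "real set"
  assumes "compact I" "I \<noteq> {}" and no_max: "\<And>s. s \<in> I \<Longrightarrow> s < c \<Longrightarrow> \<exists>t\<in>I. s < t"
  shows "\<exists>s\<in>I. c \<le> s"
proof -
  obtain s where "s \<in> I" "\<And>t. t \<in> I \<Longrightarrow> t \<le> s"
    using compact_attains_sup[OF assms(1,2)] by blast
  then show ?thesis
    using no_max by (meson not_le)
qed

lemma cube_Int_affine_hull_eq_if_support_depends_on_01_coords:
  fixes P :: "(real ^ 'n) set" and q :: "real ^ 'n \<Rightarrow> real ^ 'n \<Rightarrow> real"
  assumes "convex P" "compact P" "P \<subseteq> unit_cube" "finite V" "V \<subseteq> P"
    and weights: "\<And>y. y \<in> P \<Longrightarrow> convex_weights V (q y) y"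
    and support: "\<And>x y v. x \<in> P \<Longrightarrow> y \<in> P \<Longrightarrow> same_01_coords x y \<Longrightarrow> v \<in> V \<Longrightarrow>
      0 < q x v \<Longrightarrow> 0 < q y v"
  shows "P = unit_cube \<inter> affine hull P"
proof
  show "P \<subseteq> unit_cube \<inter> affine hull P"
    using assms(3) by (blast intro: hull_inc)
  show "unit_cube \<inter> affine hull P \<subseteq> P"
  proof
    fix z assume z: "z \<in> unit_cube \<inter> affine hull P"
    then have "P \<noteq> {}"
      by auto
    then obtain x0 where x0: "x0 \<in> rel_interior P"
      using rel_interior_eq_empty[OF assms(1)] by blast
    then have "x0 \<in> P"
      using rel_interior_subset by blast
    define xt where "xt t = x0 + t *\<^sub>R (z - x0)" for t
    obtain \<delta> where "0 < \<delta>" "\<delta> \<le> 1" "xt \<delta> \<in> P"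
      using rel_interior_two_sided_step[OF x0, of z] z unfolding xt_def by blast
    define I where "I = {\<delta>..1} \<inter> xt -` P"
    have "compact I"
      unfolding I_def xt_def
      by (intro compact_Int_closed continuous_closed_vimage compact_imp_closed assms(2))
        (auto intro!: continuous_intros)
    have "\<exists>t\<in>I. s < t" if "s \<in> I" "s < 1" for s
    proof -
      define y where "y = xt s"
      have "y \<in> P" "0 < s"
        using that \<open>0 < \<delta>\<close> by (auto simp: I_def y_def)
      have "same_01_coords x0 y"
        unfolding y_def xt_def using z \<open>0 < s\<close> \<open>s < 1\<close>
        by (intro rel_interior_segment_same_01_coords[OF assms(3) x0]) auto
      then obtain \<epsilon> where "0 < \<epsilon>"
        and beyond_y: "\<And>e. 0 \<le> e \<Longrightarrow> e \<le> \<epsilon> \<Longrightarrow> y + e *\<^sub>R (y - x0) \<in> convex hull V"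
        using convex_weights_extend_beyond[OF assms(4) weights[OF \<open>x0 \<in> P\<close>] weights[OF \<open>y \<in> P\<close>]]
          support[OF \<open>x0 \<in> P\<close> \<open>y \<in> P\<close>] by blast
      define e where "e = min \<epsilon> ((1 - s) / s)"
      have "0 < e" "s * (1 + e) \<le> 1"
        using \<open>0 < \<epsilon>\<close> \<open>0 < s\<close> \<open>s < 1\<close> by (auto simp: e_def min_def field_simps)
      then have "s < s * (1 + e)"
        using \<open>0 < s\<close> by simp
      have "xt (s * (1 + e)) = y + e *\<^sub>R (y - x0)"
        by (simp add: xt_def y_def algebra_simps)
      also have "\<dots> \<in> P"
        using beyond_y[of e] \<open>0 < e\<close> hull_minimal[of V P convex, OF assms(5,1)] by (auto simp: e_def)
      finally have "s * (1 + e) \<in> I"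
        using that \<open>s < s * (1 + e)\<close> \<open>s * (1 + e) \<le> 1\<close> by (auto simp: I_def)
      with \<open>s < s * (1 + e)\<close> show ?thesis
        by blast
    qed
    moreover have "\<delta> \<in> I"
      using \<open>\<delta> \<le> 1\<close> \<open>xt \<delta> \<in> P\<close> by (simp add: I_def)
    ultimately obtain s where "s \<in> I" "1 \<le> s"
      using compact_exists_ge_if_no_max_below[OF \<open>compact I\<close>, of 1] by auto
    then have "s = 1" "xt s \<in> P"
      by (auto simp: I_def)
    then show "z \<in> P"
      by (simp add: xt_def)
  qed
qed

section \<open>Output probabilities of a Bernoulli factory\<close>

lemma infsum_pos_iff:
  fixes f :: "'a \<Rightarrow> real"
  assumes "f summable_on A" "\<And>x. x \<in> A \<Longrightarrow> 0 \<le> f x"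
  shows "0 < infsum f A \<longleftrightarrow> (\<exists>x\<in>A. 0 < f x)"
proof
  assume "0 < infsum f A"
  show "\<exists>x\<in>A. 0 < f x"
  proof (rule ccontr)
    assume "\<not> (\<exists>x\<in>A. 0 < f x)"
    then have "infsum f A = 0"
      using assms(2) by (intro infsum_0) (meson antisym not_less)
    then show False
      using \<open>0 < infsum f A\<close> by simp
  qed
next
  assume "\<exists>x\<in>A. 0 < f x"
  then obtain x where "x \<in> A" "0 < f x"
    by blast
  show "0 < infsum f A"
  proof (rule ccontr)
    assume "\<not> 0 < infsum f A"
    then have "f x = 0"
      using nonneg_infsum_le_0D[OF _ assms \<open>x \<in> A\<close>] by simp
    then show False
      using \<open>0 < f x\<close> by simp
  qed
qed

lemma reachable_take: "reachable T p \<Longrightarrow> reachable T (take k p)"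
  unfolding reachable_def by (auto simp: min_def)

lemma edge_prob_nonneg:
  assumes "bernoulli_factory T V" "reachable T q" "x \<in> unit_cube"
  shows "0 \<le> edge_prob (T q) x b"
proof (cases "T q")
  case (Coin i)
  then show ?thesis
    using assms(3) by (auto simp: unit_cube_def)
next
  case (Const c)
  then have "0 < c \<and> c < 1"
    using assms(1,2) unfolding bernoulli_factory_def by blast
  then show ?thesis
    using Const by simp
qed simp

lemma path_weight_nonneg:
  assumes "bernoulli_factory T V" "reachable T p" "x \<in> unit_cube"
  shows "0 \<le> path_weight T x p"
  unfolding path_weight_def
  using edge_prob_nonneg[OF assms(1) reachable_take[OF assms(2)] assms(3)] by (simp add: prod_nonneg)

lemma path_weight_pos_iff:
  assumes "bernoulli_factory T V" "reachable T p" "x \<in> unit_cube"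
  shows "0 < path_weight T x p \<longleftrightarrow> (\<forall>k < length p. 0 < edge_prob (T (take k p)) x (p ! k))"
  using path_weight_nonneg[OF assms] edge_prob_nonneg[OF assms(1) reachable_take[OF assms(2)] assms(3)]
  unfolding path_weight_def by (auto simp: less_le)

lemma edge_prob_pos_iff_same_01_coords:
  assumes "x \<in> unit_cube" "y \<in> unit_cube" "same_01_coords x y"
  shows "0 < edge_prob nd x b \<longleftrightarrow> 0 < edge_prob nd y b"
proof (cases nd)
  case (Coin i)
  have "0 \<le> x $ i" "x $ i \<le> 1" "0 \<le> y $ i" "y $ i \<le> 1"
    using assms(1,2) by (auto simp: unit_cube_def)
  moreover have "(x $ i = 0 \<longleftrightarrow> y $ i = 0) \<and> (x $ i = 1 \<longleftrightarrow> y $ i = 1)"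
    using assms(3) by (auto simp: same_01_coords_def)
  ultimately show ?thesis
    using Coin by auto
qed auto

lemma path_weight_pos_iff_same_01_coords:
  assumes "bernoulli_factory T V" "reachable T p" "x \<in> unit_cube" "y \<in> unit_cube"
    and "same_01_coords x y"
  shows "0 < path_weight T x p \<longleftrightarrow> 0 < path_weight T y p"
  using assms by (simp add: path_weight_pos_iff edge_prob_pos_iff_same_01_coords)

lemma output_prob_pos_iff_same_01_coords:
  assumes "bernoulli_factory T V" "x \<in> unit_cube" "y \<in> unit_cube" "same_01_coords x y"
    and "path_weight T x summable_on leaf_paths T" "path_weight T y summable_on leaf_paths T"
  shows "0 < output_prob T x v \<longleftrightarrow> 0 < output_prob T y v"
proof -
  have pos: "0 < output_prob T z v \<longleftrightarrow> (\<exists>p\<in>leaf_paths T. T p = Leaf v \<and> 0 < path_weight T z p)"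
    if "z \<in> unit_cube" "path_weight T z summable_on leaf_paths T" for z
  proof -
    have "path_weight T z summable_on {p \<in> leaf_paths T. T p = Leaf v}"
      by (rule summable_on_subset_banach[OF that(2)]) auto
    then show ?thesis
      unfolding output_prob_def using path_weight_nonneg[OF assms(1) _ that(1)]
      by (subst infsum_pos_iff) (auto simp: leaf_paths_def)
  qed
  show ?thesis
    unfolding pos[OF assms(2,5)] pos[OF assms(3,6)]
    using path_weight_pos_iff_same_01_coords[OF assms(1) _ assms(2-4)]
    by (auto simp: leaf_paths_def)
qed

lemma UN_output_paths_eq_leaf_paths:
  assumes "bernoulli_factory T V"
  shows "(\<Union>v\<in>V. {p \<in> leaf_paths T. T p = Leaf v}) = leaf_paths T"
proof -
  have "\<exists>v\<in>V. T p = Leaf v" if "p \<in> leaf_paths T" for p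
    using that assms by (cases "T p") (auto simp: leaf_paths_def bernoulli_factory_def)
  then show ?thesis
    by blast
qed

lemma halt_prob_eq_sum_output_prob:
  assumes "bernoulli_factory T V" "finite V" "path_weight T x summable_on leaf_paths T"
  shows "halt_prob T x = (\<Sum>v\<in>V. output_prob T x v)"
proof -
  have "(\<Sum>v\<in>V. output_prob T x v)
      = infsum (path_weight T x) (\<Union>v\<in>V. {p \<in> leaf_paths T. T p = Leaf v})"
    unfolding output_prob_def
    by (rule sum_infsum[OF assms(2)]) (auto intro: summable_on_subset_banach[OF assms(3)])
  then show ?thesis
    by (simp add: UN_output_paths_eq_leaf_paths[OF assms(1)] halt_prob_def)
qed

lemma bf_expectation_eq_sum_output_prob:
  assumes "bernoulli_factory T V" "finite V" "path_weight T x summable_on leaf_paths T"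
  shows "bf_expectation T x = (\<Sum>v\<in>V. output_prob T x v *\<^sub>R v)"
proof -
  define B where "B v = {p \<in> leaf_paths T. T p = Leaf v}" for v
  define f where "f = (\<lambda>p. path_weight T x p *\<^sub>R leaf_label (T p))"
  have summable_B: "path_weight T x summable_on B v" for v
    by (rule summable_on_subset_banach[OF assms(3)]) (auto simp: B_def)
  have f_B: "f p = path_weight T x p *\<^sub>R v" if "p \<in> B v" for p v
    using that by (simp add: f_def B_def)
  have output_B: "output_prob T x v *\<^sub>R v = infsum f (B v)" for v
  proof -
    have "output_prob T x v *\<^sub>R v = infsum (\<lambda>p. path_weight T x p *\<^sub>R v) (B v)"
      unfolding output_prob_def B_def[symmetric] using summable_B by (simp add: infsum_scaleR_left)
    also have "\<dots> = infsum f (B v)"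
      using f_B by (intro infsum_cong) auto
    finally show ?thesis .
  qed
  have "f summable_on B v" for v
  proof -
    have "(\<lambda>p. path_weight T x p *\<^sub>R v) summable_on B v"
      using summable_B by (rule summable_on_scaleR_left)
    then show ?thesis
      by (subst summable_on_cong[OF f_B])
  qed
  then have "(\<Sum>v\<in>V. output_prob T x v *\<^sub>R v) = infsum f (\<Union>v\<in>V. B v)"
    unfolding output_B by (rule sum_infsum[OF assms(2)]) (auto simp: B_def)
  then show ?thesis
    using UN_output_paths_eq_leaf_paths[OF assms(1)]
    by (simp add: bf_expectation_def f_def B_def)
qed

lemma summable_on_leaf_paths_if_halt_prob_nonzero:
  "halt_prob T x \<noteq> 0 \<Longrightarrow> path_weight T x summable_on leaf_paths T"
  unfolding halt_prob_def using infsum_not_exists by blast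

lemma strong_bernoulli_factory_output_weights:
  assumes "strong_bernoulli_factory P T" "P \<subseteq> unit_cube" "finite {v. v extreme_point_of P}"
    and "y \<in> P"
  shows "convex_weights {v. v extreme_point_of P} (output_prob T y) y"
proof -
  have bf: "bernoulli_factory T {v. v extreme_point_of P}"
    and halt: "halt_prob T y = 1" and mean: "bf_expectation T y = y"
    using assms(1,4) by (auto simp: strong_bernoulli_factory_def terminates_as_def)
  have summable: "path_weight T y summable_on leaf_paths T"
    using halt by (simp add: summable_on_leaf_paths_if_halt_prob_nonzero)
  have "0 \<le> output_prob T y v" for v
    unfolding output_prob_def using path_weight_nonneg[OF bf _ subsetD[OF assms(2,4)]]
    by (intro infsum_nonneg) (auto simp: leaf_paths_def)
  then show ?thesis
    unfolding convex_weights_def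
    using halt_prob_eq_sum_output_prob[OF bf assms(3) summable]
      bf_expectation_eq_sum_output_prob[OF bf assms(3) summable] halt mean
    by simp
qed

theorem theorem4p2:
  fixes P :: "(real ^ 'n) set"
  assumes "polytope P"
    and "P \<subseteq> unit_cube"
    and "\<not> (\<exists>H :: (real ^ 'n) set. affine H \<and> P = unit_cube \<inter> H)"
  shows "\<not> (\<exists>T :: ('n, real ^ 'n) bf_tree. strong_bernoulli_factory P T)"
proof
  assume "\<exists>T :: ('n, real ^ 'n) bf_tree. strong_bernoulli_factory P T"
  then obtain T :: "('n, real ^ 'n) bf_tree" where T: "strong_bernoulli_factory P T"
    by blast
  define V where "V = {v. v extreme_point_of P}"
  have "finite V"
    unfolding V_def using assms(1) by (simp add: finite_polyhedron_extreme_points polytope_imp_polyhedron)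
  have bf: "bernoulli_factory T V" and summable: "\<And>y. y \<in> P \<Longrightarrow> path_weight T y summable_on leaf_paths T"
    using T by (auto simp: strong_bernoulli_factory_def terminates_as_def V_def
        intro: summable_on_leaf_paths_if_halt_prob_nonzero)
  have "P = unit_cube \<inter> affine hull P"
  proof (rule cube_Int_affine_hull_eq_if_support_depends_on_01_coords[where V = V])
    show "convex P" "compact P"
      using assms(1) by (simp_all add: polytope_imp_convex polytope_imp_compact)
    show "V \<subseteq> P"
      by (auto simp: V_def extreme_point_of_def)
    show "convex_weights V (output_prob T y) y" if "y \<in> P" for y
      using strong_bernoulli_factory_output_weights[OF T assms(2)] \<open>finite V\<close> that by (simp add: V_def)
    show "0 < output_prob T y v"
      if "x \<in> P" "y \<in> P" "same_01_coords x y" "0 < output_prob T x v" for x y v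
      using output_prob_pos_iff_same_01_coords[OF bf _ _ that(3) summable summable] that assms(2) by blast
  qed (use assms(2) \<open>finite V\<close> in auto)
  then show False
    using assms(3) affine_affine_hull by blast
qed

end
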